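(* Let $p$ be a prime and $(K,|\cdot|)$ an algebraically closed ultrametric field of residue characteristic $p$. Let $q\ge1$ be an integer not divisible by $p$ and $\lambda\in K$ with $|\lambda|=1$ such that $\widetilde\lambda$ has order $q$ in $\widetilde K^*$. Let $f(z)=\lambda z+\cdots\in\mathcal{O}_K[[z]]$. (1) If $\mathrm{wideg}(f^q(z)-z)=q+1$ and $\lambda^q\ne1$, then $f$ has a unique periodic orbit in $\mathfrak{m}_K\setminus\{0\}$ of minimal period $q$, and every point $w_0$ of this orbit satisfies $|w_0|=|\lambda^q-1|^{1/q}$. (2) Let $n\ge1$ be an integer and suppose $\mathrm{wideg}\left(\frac{f^{qp^n}(z)-z}{f^{qp^{n-1}}(z)-z}\right)=qp^n$ and that every periodic point $z_0\in\mathfrak{m}_K$ of $f$ of period $qp^{n-1}$ satisfies $(f^{qp^n})'(z_0)\ne1$. Then $f$ has a unique cycle of minimal period $qp^n$, and this cycle is optimal, i.e., each of its points $z_0$ satisfies $|z_0|=\left|\frac{\lambda^{qp^n}-1}{\lambda^{qp^{n-1}}-1}\right|^{1/(qp^n)}$.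
   Context: $\mathcal{O}_K=\{|z|\le1\}$, $\mathfrak{m}_K=\{|z|<1\}$, $\widetilde K=\mathcal{O}_K/\mathfrak{m}_K$. Periodic points are taken in $\mathfrak{m}_K$. For $h\in\mathcal{O}_K[[z]]$, $\mathrm{wideg}(h)$ is the order (lowest degree of a nonzero term) of its reduction in $\widetilde K[[\zeta]]$. The power series $f^{qp^{n-1}}(z)-z$ divides $f^{qp^n}(z)-z$ in $\mathcal{O}_K[[z]]$. *)

theory Defs
  imports "HOL-Computational_Algebra.Computational_Algebra" "HOL-Library.Extended_Nat"
begin

definition ultrametric_abs :: "('a::field \<Rightarrow> real) \<Rightarrow> bool" where
  "ultrametric_abs av \<longleftrightarrow>
     (\<forall>x. 0 \<le> av x) \<and> (\<forall>x. av x = 0 \<longleftrightarrow> x = 0) \<and>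
     (\<forall>x y. av (x * y) = av x * av y) \<and>
     (\<forall>x y. av (x + y) \<le> max (av x) (av y))"

definition complete_abs :: "('a::field \<Rightarrow> real) \<Rightarrow> bool" where
  "complete_abs av \<longleftrightarrow>
     (\<forall>s::nat \<Rightarrow> 'a. (\<forall>e>0. \<exists>N. \<forall>m\<ge>N. \<forall>n\<ge>N. av (s m - s n) < e) \<longrightarrow>
        (\<exists>L. (\<lambda>n. av (s n - L)) \<longlonglongrightarrow> 0))"

definition alg_closed_field :: "'a::field itself \<Rightarrow> bool" where
  "alg_closed_field _ \<longleftrightarrow> (\<forall>P :: 'a poly. degree P \<ge> 1 \<longrightarrow> (\<exists>x. poly P x = 0))"

definition val_ring :: "('a::field \<Rightarrow> real) \<Rightarrow> 'a set" where
  "val_ring av = {z. av z \<le> 1}"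

definition max_ideal :: "('a::field \<Rightarrow> real) \<Rightarrow> 'a set" where
  "max_ideal av = {z. av z < 1}"

definition integral_fps :: "('a::field \<Rightarrow> real) \<Rightarrow> 'a fps \<Rightarrow> bool" where
  "integral_fps av h \<longleftrightarrow> (\<forall>n. av (fps_nth h n) \<le> 1)"

text \<open>Weierstrass degree: order of the reduction modulo m_K (infinity if the reduction is 0).\<close>
definition wideg :: "('a::field \<Rightarrow> real) \<Rightarrow> 'a fps \<Rightarrow> enat" where
  "wideg av h = (if \<exists>n. \<not> av (fps_nth h n) < 1
                 then enat (LEAST n. \<not> av (fps_nth h n) < 1) else \<infinity>)"

definition fps_converges_to :: "('a::field \<Rightarrow> real) \<Rightarrow> 'a fps \<Rightarrow> 'a \<Rightarrow> 'a \<Rightarrow> bool" where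
  "fps_converges_to av h z w \<longleftrightarrow>
     (\<lambda>N. av ((\<Sum>k<N. fps_nth h k * z ^ k) - w)) \<longlonglongrightarrow> 0"

definition fps_value :: "('a::field \<Rightarrow> real) \<Rightarrow> 'a fps \<Rightarrow> 'a \<Rightarrow> 'a" where
  "fps_value av h z = (THE w. fps_converges_to av h z w)"

definition fps_iter :: "'a::field fps \<Rightarrow> nat \<Rightarrow> 'a fps" where
  "fps_iter f n = ((\<lambda>g. f oo g) ^^ n) fps_X"

definition periodic_pt :: "('a::field \<Rightarrow> real) \<Rightarrow> 'a fps \<Rightarrow> nat \<Rightarrow> 'a \<Rightarrow> bool" where
  "periodic_pt av f m z \<longleftrightarrow> z \<in> max_ideal av \<and> ((fps_value av f) ^^ m) z = z"

definition minimal_period :: "('a::field \<Rightarrow> real) \<Rightarrow> 'a fps \<Rightarrow> nat \<Rightarrow> 'a \<Rightarrow> bool" where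
  "minimal_period av f m z \<longleftrightarrow> m \<ge> 1 \<and> periodic_pt av f m z \<and>
     (\<forall>k. 1 \<le> k \<and> k < m \<longrightarrow> \<not> periodic_pt av f k z)"

definition orbit :: "('a::field \<Rightarrow> real) \<Rightarrow> 'a fps \<Rightarrow> 'a \<Rightarrow> 'a set" where
  "orbit av f z = {((fps_value av f) ^^ k) z | k. True}"

end

theory Submission
  imports Defs
begin

text \<open>
  Integral power series converge on the maximal ideal, and evaluation there is a ring
  homomorphism compatible with composition, so the fixed points of the \<open>m\<close>-th iterate of \<open>f\<close>
  are the zeros of \<open>f\<^sup>m(z) - z\<close>. By Weierstrass preparation an integral series \<open>C\<close> of
  Weierstrass degree \<open>d\<close> is a unit times a monic polynomial of degree \<open>d\<close> whose roots lie in the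
  maximal ideal; so \<open>C\<close> has exactly \<open>d\<close> zeros there, with multiplicity, and \<open>|C(0)|\<close> is the
  product of their absolute values.

  Since \<open>|\<lambda>| = 1\<close>, \<open>f\<close> acts isometrically, and its \<open>m\<close>-th iterate has no nonzero fixed point
  unless \<open>q\<close> divides \<open>m\<close>, since otherwise \<open>\<lambda>\<^sup>m - 1\<close> is a unit. In part (1) take
  \<open>C = (f\<^sup>q(z) - z) / z\<close>, in part (2) the quotient of \<open>f\<^sup>b(z) - z\<close> by \<open>f\<^sup>a(z) - z\<close> for
  \<open>a = qp\<^sup>n\<^sup>-\<^sup>1\<close>, \<open>b = qp\<^sup>n\<close>; there the derivative hypothesis says that a zero of \<open>C\<close> cannot be
  fixed by \<open>f\<^sup>a\<close>, as it would be a double zero of \<open>f\<^sup>b(z) - z\<close>. In both cases the zeros of \<open>C\<close>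
  are exactly the nonzero points of exact period \<open>d\<close> (\<open>d = q\<close>, resp. \<open>d = b\<close>). A cycle of
  exact period \<open>d\<close> already accounts for all \<open>d\<close> zeros, so it is the only one, and as its points
  share one absolute value, \<open>|w|\<^sup>d = |C(0)|\<close>.
\<close>

definition fps_partial_sum :: "'a::field fps \<Rightarrow> 'a \<Rightarrow> nat \<Rightarrow> 'a" where
  "fps_partial_sum F z N = (\<Sum>k<N. F $ k * z ^ k)"

section \<open>Ultrametric absolute values\<close>

locale ultrametric_field =
  fixes av :: "'a::field \<Rightarrow> real"
  assumes ultrametric: "ultrametric_abs av"
    and complete: "complete_abs av"
begin

lemma av_nonneg [simp]: "0 \<le> av x"
  using ultrametric unfolding ultrametric_abs_def by blast

lemma av_eq_0_iff [simp]: "av x = 0 \<longleftrightarrow> x = 0"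
  using ultrametric unfolding ultrametric_abs_def by blast

lemma av_0 [simp]: "av 0 = 0"
  by simp

lemma av_mult [simp]: "av (x * y) = av x * av y"
  using ultrametric unfolding ultrametric_abs_def by blast

lemma av_add_le_max: "av (x + y) \<le> max (av x) (av y)"
  using ultrametric unfolding ultrametric_abs_def by blast

lemma av_pos_iff [simp]: "0 < av x \<longleftrightarrow> x \<noteq> 0"
  using av_nonneg[of x] av_eq_0_iff[of x] by linarith

lemma av_1 [simp]: "av 1 = 1"
  using av_mult[of 1 1] by (metis av_eq_0_iff mult_cancel_left1 one_neq_zero)

lemma av_uminus [simp]: "av (- x) = av x"
proof -
  have "(av (-1) - 1) * (av (-1) + 1) = 0"
    using av_mult[of "-1" "-1"] by (simp add: algebra_simps)
  moreover have "av (-1) + 1 > 0"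
    using av_nonneg[of "-1"] by linarith
  ultimately have "av (-1) = 1" by simp
  then show ?thesis using av_mult[of "-1" x] by simp
qed

lemma av_power [simp]: "av (x ^ n) = av x ^ n"
  by (induction n) auto

lemma av_inverse [simp]: "av (inverse x) = inverse (av x)"
proof (cases "x = 0")
  case False
  then have "av x * av (inverse x) = 1" by (simp flip: av_mult)
  then show ?thesis by (rule inverse_unique[symmetric])
qed simp

lemma av_prod: "av (prod g S) = (\<Prod>i\<in>S. av (g i))"
  by (induction S rule: infinite_finite_induct) auto

lemma av_minus_commute: "av (x - y) = av (y - x)"
  by (metis av_uminus minus_diff_eq)

lemma av_add_le: "av x \<le> c \<Longrightarrow> av y \<le> c \<Longrightarrow> av (x + y) \<le> c"
  using av_add_le_max[of x y] by linarith

lemma av_add_less: "av x < c \<Longrightarrow> av y < c \<Longrightarrow> av (x + y) < c"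
  using av_add_le_max[of x y] by linarith

lemma av_diff_le: "av x \<le> c \<Longrightarrow> av y \<le> c \<Longrightarrow> av (x - y) \<le> c"
  using av_add_le[of x c "- y"] by simp

lemma av_diff_less: "av x < c \<Longrightarrow> av y < c \<Longrightarrow> av (x - y) < c"
  using av_add_less[of x c "- y"] by simp

lemma av_add_eq_right: "av x < av y \<Longrightarrow> av (x + y) = av y"
  using av_add_le_max[of x y] av_add_le_max[of "x + y" "- x"] by auto

lemma av_sum_le: "0 \<le> c \<Longrightarrow> (\<And>i. i \<in> S \<Longrightarrow> av (g i) \<le> c) \<Longrightarrow> av (sum g S) \<le> c"
  by (induction S rule: infinite_finite_induct) (auto intro: av_add_le)

lemma av_sum_less: "0 < c \<Longrightarrow> (\<And>i. i \<in> S \<Longrightarrow> av (g i) < c) \<Longrightarrow> av (sum g S) < c"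
  by (induction S rule: infinite_finite_induct) (auto intro: av_add_less)

lemma av_mult_le: "av x \<le> 1 \<Longrightarrow> av y \<le> c \<Longrightarrow> av (x * y) \<le> c"
  using mult_mono[of "av x" 1 "av y" c] by simp

lemma av_mult_less: "av x \<le> 1 \<Longrightarrow> av y < c \<Longrightarrow> av (x * y) < c"
  using mult_left_le_one_le[of "av y" "av x"] by simp

lemma av_of_nat_le_1: "av (of_nat n) \<le> 1"
  by (induction n) (auto intro: av_add_le)

lemma av_le_powers_imp_zero:
  assumes "\<And>k. av x \<le> e ^ k" and "e < 1"
  shows "x = 0"
proof (rule ccontr)
  assume "x \<noteq> 0"
  then obtain k where "e ^ k < av x" using real_arch_pow_inv[of "av x" e] assms(2) by auto
  with assms(1)[of k] show False by linarith
qed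

lemma av_diff_le_add: "av (a - b) \<le> av (c - a) + av (c - b)"
proof -
  have "av (a - b) \<le> max (av (c - b)) (av (a - c))"
    using av_add_le_max[of "c - b" "a - c"] by simp
  then show ?thesis
    using av_minus_commute[of a c] av_nonneg[of "c - a"] av_nonneg[of "c - b"] by (smt (verit))
qed

lemma limit_unique:
  assumes "(\<lambda>n. av (s n - a)) \<longlonglongrightarrow> 0" and "(\<lambda>n. av (s n - b)) \<longlonglongrightarrow> 0"
  shows "a = b"
proof -
  have "av (a - b) \<le> 0"
    using LIMSEQ_le_const[OF tendsto_add[OF assms]] av_diff_le_add[of a b] by simp
  then have "av (a - b) = 0" using av_nonneg[of "a - b"] by linarith
  then show ?thesis by simp
qed

lemma geometric_cauchy_limit:
  assumes e: "e < 1" and cauchy: "\<And>k m. k \<le> m \<Longrightarrow> av (s m - s k) \<le> e ^ k"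
  obtains L where "(\<lambda>n. av (s n - L)) \<longlonglongrightarrow> 0" and "\<And>k. av (L - s k) \<le> e ^ k"
proof -
  have e0: "0 \<le> e" using cauchy[of 1 1] by simp
  have tail: "av (s m - s n) \<le> e ^ N" if "N \<le> m" "N \<le> n" for m n N
  proof -
    have "av (s m - s n) \<le> e ^ min m n"
      using cauchy[of n m] cauchy[of m n] av_minus_commute[of "s m"] by (cases "n \<le> m") auto
    also have "\<dots> \<le> e ^ N" using that e e0 by (intro power_decreasing) auto
    finally show ?thesis .
  qed
  have "\<exists>N. \<forall>m\<ge>N. \<forall>n\<ge>N. av (s m - s n) < \<epsilon>" if \<epsilon>: "\<epsilon> > 0" for \<epsilon>
  proof -
    obtain N where "e ^ N < \<epsilon>" using real_arch_pow_inv[OF \<epsilon> e] by blast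
    then show ?thesis using tail by (meson le_less_trans)
  qed
  then obtain L where L: "(\<lambda>n. av (s n - L)) \<longlonglongrightarrow> 0"
    using complete unfolding complete_abs_def by blast
  have "av (L - s k) \<le> e ^ k" for k
  proof -
    have "av (L - s k) \<le> av (s n - L) + e ^ k" if "k \<le> n" for n
      using av_diff_le_add[of L "s k" "s n"] cauchy[OF that] by simp
    then show ?thesis
      using LIMSEQ_le_const[OF tendsto_add[OF L tendsto_const[of "e ^ k"]]] by auto
  qed
  with L show ?thesis by (rule that)
qed

section \<open>Integral power series and their values on the maximal ideal\<close>

lemma integral_fps_nth: "integral_fps av F \<Longrightarrow> av (F $ n) \<le> 1"
  unfolding integral_fps_def by blast

lemma integral_fpsI: "(\<And>n. av (F $ n) \<le> 1) \<Longrightarrow> integral_fps av F"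
  unfolding integral_fps_def by blast

lemma integral_fps_0 [simp]: "integral_fps av 0"
  and integral_fps_1 [simp]: "integral_fps av 1"
  and integral_fps_X [simp]: "integral_fps av fps_X"
  by (auto intro!: integral_fpsI simp: fps_X_def)

lemma integral_fps_const: "av c \<le> 1 \<Longrightarrow> integral_fps av (fps_const c)"
  by (rule integral_fpsI) simp

lemma integral_fps_add:
  assumes "integral_fps av F" "integral_fps av G"
  shows "integral_fps av (F + G)"
  by (rule integral_fpsI) (simp add: av_add_le integral_fps_nth assms)

lemma integral_fps_uminus: "integral_fps av F \<Longrightarrow> integral_fps av (- F)"
  by (rule integral_fpsI) (simp add: integral_fps_nth)

lemma integral_fps_diff:
  assumes "integral_fps av F" "integral_fps av G"
  shows "integral_fps av (F - G)"
  by (rule integral_fpsI) (simp add: av_diff_le integral_fps_nth assms)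

lemma integral_fps_mult:
  assumes "integral_fps av F" "integral_fps av G"
  shows "integral_fps av (F * G)"
proof (rule integral_fpsI)
  fix n
  show "av ((F * G) $ n) \<le> 1"
    unfolding fps_mult_nth
    by (rule av_sum_le) (simp_all add: mult_le_one integral_fps_nth assms)
qed

lemma integral_fps_power: "integral_fps av F \<Longrightarrow> integral_fps av (F ^ n)"
  by (induction n) (simp_all add: integral_fps_mult)

lemma integral_fps_sum:
  "(\<And>i. i \<in> S \<Longrightarrow> integral_fps av (g i)) \<Longrightarrow> integral_fps av (sum g S)"
  by (induction S rule: infinite_finite_induct) (simp_all add: integral_fps_add)

lemma integral_fps_compose:
  assumes "integral_fps av F" "integral_fps av G"
  shows "integral_fps av (F oo G)"
proof (rule integral_fpsI)
  fix n
  show "av ((F oo G) $ n) \<le> 1"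
    unfolding fps_compose_nth
    by (rule av_sum_le) (simp_all add: mult_le_one integral_fps_nth integral_fps_power assms)
qed

lemma integral_fps_shift: "integral_fps av F \<Longrightarrow> integral_fps av (fps_shift k F)"
  by (rule integral_fpsI) (simp add: integral_fps_nth)

lemma integral_fps_deriv:
  assumes "integral_fps av F"
  shows "integral_fps av (fps_deriv F)"
proof (rule integral_fpsI)
  fix n
  have "av (of_nat (Suc n) :: 'a) * av (F $ Suc n) \<le> 1"
    using av_of_nat_le_1[of "Suc n"]
    by (intro mult_le_one) (simp_all add: integral_fps_nth assms del: of_nat_Suc)
  then show "av (fps_deriv F $ n) \<le> 1" by (simp del: of_nat_Suc)
qed

lemma integral_fps_inverse:
  assumes F: "integral_fps av F" and F0: "av (F $ 0) = 1"
  shows "integral_fps av (inverse F)"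
proof (rule integral_fpsI)
  have F0': "F $ 0 \<noteq> 0" using F0 by auto
  fix n show "av (inverse F $ n) \<le> 1"
  proof (induction n rule: less_induct)
    case (less n)
    show ?case
    proof (cases n)
      case 0 then show ?thesis using F0 by simp
    next
      case (Suc m)
      have "0 = (inverse F * F) $ n" using inverse_mult_eq_1[OF F0'] Suc by simp
      also have "\<dots> = (\<Sum>i=0..m. inverse F $ i * F $ (n - i)) + inverse F $ n * F $ 0"
        unfolding fps_mult_nth Suc sum.atLeast0_atMost_Suc by simp
      finally have "av (inverse F $ n) = av (\<Sum>i=0..m. inverse F $ i * F $ (n - i))"
        using F0 by (metis add.commute av_mult av_uminus eq_neg_iff_add_eq_0 mult.right_neutral)
      also have "\<dots> \<le> 1"
        using less Suc by (auto intro!: av_sum_le mult_le_one integral_fps_nth[OF F])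
      finally show ?thesis .
    qed
  qed
qed

lemma partial_sum_diff_le:
  assumes "integral_fps av F" "av z < 1" "N \<le> M"
  shows "av (fps_partial_sum F z M - fps_partial_sum F z N) \<le> av z ^ N"
proof -
  have "fps_partial_sum F z M - fps_partial_sum F z N = (\<Sum>k\<in>{N..<M}. F $ k * z ^ k)"
    unfolding fps_partial_sum_def using assms(3)
    by (metis add_diff_cancel_left' lessThan_atLeast0 sum.atLeastLessThan_concat zero_le)
  also have "av \<dots> \<le> av z ^ N"
  proof (rule av_sum_le)
    fix k assume k: "k \<in> {N..<M}"
    have "av (F $ k) * av z ^ k \<le> 1 * av z ^ N"
      using k assms by (intro mult_mono power_decreasing integral_fps_nth) auto
    then show "av (F $ k * z ^ k) \<le> av z ^ N" by simp
  qed simp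
  finally show ?thesis .
qed

lemma fps_value_approx:
  assumes "integral_fps av F" "av z < 1"
  shows "av (fps_value av F z - fps_partial_sum F z N) \<le> av z ^ N"
proof -
  obtain L where L: "fps_converges_to av F z L"
    and tail: "\<And>k. av (L - fps_partial_sum F z k) \<le> av z ^ k"
    using geometric_cauchy_limit[OF assms(2) partial_sum_diff_le[OF assms]]
    unfolding fps_converges_to_def fps_partial_sum_def by blast
  have "fps_value av F z = L"
    unfolding fps_value_def
    by (rule the_equality[where P = "fps_converges_to av F z", OF L])
      (use L in \<open>auto simp: fps_converges_to_def intro: limit_unique\<close>)
  then show ?thesis using tail by simp
qed

lemma fps_value_eqI:
  assumes "integral_fps av F" "av z < 1" "\<And>N. av (w - fps_partial_sum F z N) \<le> av z ^ N"
  shows "fps_value av F z = w"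
proof -
  have "av (fps_value av F z - w) \<le> av z ^ N" for N
    using av_diff_le[OF fps_value_approx[OF assms(1,2)] assms(3)] by simp
  then show ?thesis using av_le_powers_imp_zero[of "fps_value av F z - w" "av z"] assms(2) by simp
qed

lemma fps_value_le_1: "integral_fps av F \<Longrightarrow> av z < 1 \<Longrightarrow> av (fps_value av F z) \<le> 1"
  using fps_value_approx[of F z 0] by (simp add: fps_partial_sum_def)

lemma fps_value_add:
  assumes "integral_fps av F" "integral_fps av G" "av z < 1"
  shows "fps_value av (F + G) z = fps_value av F z + fps_value av G z"
proof (rule fps_value_eqI)
  fix N
  have "fps_value av F z + fps_value av G z - fps_partial_sum (F + G) z N =
     (fps_value av F z - fps_partial_sum F z N) + (fps_value av G z - fps_partial_sum G z N)"
    by (simp add: fps_partial_sum_def sum.distrib algebra_simps)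
  then show "av (fps_value av F z + fps_value av G z - fps_partial_sum (F + G) z N) \<le> av z ^ N"
    using av_add_le[OF fps_value_approx[OF assms(1,3), of N] fps_value_approx[OF assms(2,3), of N]]
    by (simp only:)
qed (use assms in \<open>simp_all add: integral_fps_add\<close>)

lemma fps_value_const_mult:
  assumes "integral_fps av F" "av c \<le> 1" "av z < 1"
  shows "fps_value av (fps_const c * F) z = c * fps_value av F z"
proof (rule fps_value_eqI)
  fix N
  have "av (c * fps_value av F z - fps_partial_sum (fps_const c * F) z N)
      = av c * av (fps_value av F z - fps_partial_sum F z N)"
    by (simp add: fps_partial_sum_def sum_distrib_left algebra_simps flip: av_mult)
  also have "\<dots> \<le> 1 * av z ^ N"
    using assms fps_value_approx[OF assms(1,3)] by (intro mult_mono) auto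
  finally show "av (c * fps_value av F z - fps_partial_sum (fps_const c * F) z N) \<le> av z ^ N"
    by simp
qed (use assms in \<open>simp_all add: integral_fps_mult integral_fps_const\<close>)

lemma fps_value_uminus:
  assumes "integral_fps av F" "av z < 1"
  shows "fps_value av (- F) z = - fps_value av F z"
proof -
  have "- F = fps_const (-1) * F" by (rule fps_ext) simp
  then show ?thesis using fps_value_const_mult[OF assms(1) _ assms(2), of "-1"] by simp
qed

lemma fps_value_diff:
  assumes "integral_fps av F" "integral_fps av G" "av z < 1"
  shows "fps_value av (F - G) z = fps_value av F z - fps_value av G z"
  using fps_value_add[OF assms(1) integral_fps_uminus[OF assms(2)] assms(3)]
    fps_value_uminus[OF assms(2,3)] by simp

lemma fps_value_X_mult:
  assumes "integral_fps av F" "av z < 1"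
  shows "fps_value av (fps_X * F) z = z * fps_value av F z"
proof (rule fps_value_eqI)
  fix N
  show "av (z * fps_value av F z - fps_partial_sum (fps_X * F) z N) \<le> av z ^ N"
  proof (cases N)
    case 0
    then show ?thesis
      using fps_value_le_1[OF assms] assms(2) by (simp add: fps_partial_sum_def mult_le_one)
  next
    case (Suc M)
    have "fps_partial_sum (fps_X * F) z N = z * fps_partial_sum F z M"
      unfolding fps_partial_sum_def Suc sum.lessThan_Suc_shift
      by (simp add: fps_X_mult_nth sum_distrib_left algebra_simps del: sum.lessThan_Suc)
    then have "av (z * fps_value av F z - fps_partial_sum (fps_X * F) z N)
        = av z * av (fps_value av F z - fps_partial_sum F z M)"
      by (simp flip: av_mult right_diff_distrib)
    also have "\<dots> \<le> av z * av z ^ M"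
      by (rule mult_left_mono) (simp_all add: fps_value_approx assms)
    finally show ?thesis using Suc by simp
  qed
qed (use assms in \<open>simp_all add: integral_fps_mult\<close>)

lemma fps_value_const:
  assumes "av c \<le> 1" "av z < 1"
  shows "fps_value av (fps_const c) z = c"
proof (rule fps_value_eqI)
  fix N
  show "av (c - fps_partial_sum (fps_const c) z N) \<le> av z ^ N"
    using assms
      by (cases N) (simp_all add: fps_partial_sum_def sum.lessThan_Suc_shift del: sum.lessThan_Suc)
qed (use assms in \<open>simp_all add: integral_fps_const\<close>)

lemma fps_value_0 [simp]: "av z < 1 \<Longrightarrow> fps_value av 0 z = 0"
  and fps_value_1 [simp]: "av z < 1 \<Longrightarrow> fps_value av 1 z = 1"
  and fps_value_X [simp]: "av z < 1 \<Longrightarrow> fps_value av fps_X z = z"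
  using fps_value_const[of 0 z] fps_value_const[of 1 z] fps_value_X_mult[of 1 z] by simp_all

lemma fps_eq_const_plus_X_mult_shift: "(F :: 'a fps) = fps_const (F $ 0) + fps_X * fps_shift 1 F"
proof (rule fps_ext)
  fix n show "F $ n = (fps_const (F $ 0) + fps_X * fps_shift 1 F) $ n"
    by (cases n) (simp_all del: fps_mult_nth_1' add: fps_X_mult_nth)
qed

lemma fps_value_eq_nth_0_plus:
  assumes "integral_fps av F" "av z < 1"
  shows "fps_value av F z = F $ 0 + z * fps_value av (fps_shift 1 F) z"
proof -
  have "fps_value av F z = fps_value av (fps_const (F $ 0) + fps_X * fps_shift 1 F) z"
    by (subst fps_eq_const_plus_X_mult_shift) simp
  also have "\<dots> = F $ 0 + z * fps_value av (fps_shift 1 F) z"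
    using assms
    by (simp add: fps_value_add integral_fps_const integral_fps_nth integral_fps_mult
        integral_fps_shift fps_value_const fps_value_X_mult)
  finally show ?thesis .
qed

lemma fps_value_at_0: "integral_fps av F \<Longrightarrow> fps_value av F 0 = F $ 0"
  using fps_value_eq_nth_0_plus[of F 0] by simp

lemma av_fps_value_le:
  assumes "integral_fps av F" "av z < 1" "F $ 0 = 0"
  shows "av (fps_value av F z) \<le> av z"
  using fps_value_eq_nth_0_plus[OF assms(1,2)] assms
    fps_value_le_1[OF integral_fps_shift[OF assms(1)] assms(2), of 1]
  by (simp add: mult_left_le)

lemma fps_value_unit:
  assumes "integral_fps av U" "av (U $ 0) = 1" "av z < 1"
  shows "av (fps_value av U z) = 1"
proof -
  have "av z * av (fps_value av (fps_shift 1 U) z) < av (U $ 0)"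
    using assms fps_value_le_1[OF integral_fps_shift[OF assms(1)] assms(3), of 1]
    by (simp add: mult_le_one le_less_trans[OF mult_left_le])
  then show ?thesis
    using av_add_eq_right[of "z * fps_value av (fps_shift 1 U) z" "U $ 0"]
      fps_value_eq_nth_0_plus[OF assms(1,3)] assms(2)
    by (simp add: add.commute)
qed

text \<open>
  The error term for \<open>A\<close> is \<open>z\<close> (resp. the value of the inner series) times the error term
  for \<open>fps_shift 1 A\<close>, so by induction it is bounded by every power of a number \<open>< 1\<close>.
\<close>

lemma fps_value_mult:
  assumes A: "integral_fps av A" and B: "integral_fps av B" and z: "av z < 1"
  shows "fps_value av (A * B) z = fps_value av A z * fps_value av B z"
proof -
  define err where "err A = fps_value av (A * B) z - fps_value av A z * fps_value av B z" for A
  have "av (err A) \<le> av z ^ M" if "integral_fps av A" for A M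
    using that
  proof (induction M arbitrary: A)
    case 0
    then show ?case
      unfolding err_def using B z
      by (intro av_diff_le) (simp_all add: fps_value_le_1 integral_fps_mult mult_le_one)
  next
    case (Suc M)
    define A' where "A' = fps_shift 1 A"
    have A': "integral_fps av A'" using Suc.prems by (simp add: A'_def integral_fps_shift)
    have "A * B = fps_const (A $ 0) * B + fps_X * (A' * B)"
      by (subst fps_eq_const_plus_X_mult_shift) (simp add: A'_def algebra_simps)
    then have "fps_value av (A * B) z = A $ 0 * fps_value av B z + z * fps_value av (A' * B) z"
      using Suc.prems A' B z
      by (simp add: fps_value_add fps_value_const_mult integral_fps_nth integral_fps_mult
          integral_fps_const fps_value_X_mult)
    then have "err A = z * err A'"
      using fps_value_eq_nth_0_plus[OF Suc.prems z] unfolding err_def A'_def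
      by (simp add: algebra_simps)
    then show ?case
      using Suc.IH[OF A'] by (simp add: mult_left_mono)
  qed
  then show ?thesis
    using av_le_powers_imp_zero[of "err A" "av z"] A z unfolding err_def by simp
qed

lemma fps_value_compose:
  assumes F: "integral_fps av F" and G: "integral_fps av G" "G $ 0 = 0" and z: "av z < 1"
  shows "fps_value av (F oo G) z = fps_value av F (fps_value av G z)"
proof -
  define y where "y = fps_value av G z"
  have y: "av y < 1" using av_fps_value_le[OF G(1) z G(2)] z unfolding y_def by linarith
  define err where "err F = fps_value av (F oo G) z - fps_value av F y" for F
  have "av (err F) \<le> av y ^ M" if "integral_fps av F" for F M
    using that
  proof (induction M arbitrary: F)
    case 0
    then show ?case
      unfolding err_def using G z y
      by (intro av_diff_le) (simp_all add: fps_value_le_1 integral_fps_compose)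
  next
    case (Suc M)
    define F' where "F' = fps_shift 1 F"
    have F': "integral_fps av F'" using Suc.prems by (simp add: F'_def integral_fps_shift)
    have "F oo G = (fps_const (F $ 0) + fps_X * F') oo G"
      unfolding F'_def by (subst fps_eq_const_plus_X_mult_shift) simp
    also have "\<dots> = fps_const (F $ 0) + G * (F' oo G)"
      using G(2) by (simp add: fps_compose_add_distrib fps_compose_mult_distrib)
    finally have "F oo G = fps_const (F $ 0) + G * (F' oo G)" .
    then have "fps_value av (F oo G) z = F $ 0 + y * fps_value av (F' oo G) z"
      using Suc.prems F' G z unfolding y_def
      by (simp add: fps_value_add fps_value_mult integral_fps_nth integral_fps_mult
          integral_fps_const integral_fps_compose fps_value_const)
    then have "err F = y * err F'"
      using fps_value_eq_nth_0_plus[OF Suc.prems y] unfolding err_def F'_def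
      by (simp add: algebra_simps)
    then show ?case
      using Suc.IH[OF F'] by (simp add: mult_left_mono)
  qed
  then show ?thesis
    using av_le_powers_imp_zero[of "err F" "av y"] F y unfolding err_def y_def by simp
qed

lemma fps_value_poly:
  assumes "\<And>i. av (coeff P i) \<le> 1" "av z < 1"
  shows "integral_fps av (fps_of_poly P) \<and> fps_value av (fps_of_poly P) z = poly P z"
  using assms(1)
proof (induction P rule: pCons_induct)
  case (pCons c P)
  have "av (coeff P i) \<le> 1" for i using pCons.prems[of "Suc i"] by simp
  then have IH: "integral_fps av (fps_of_poly P)" "fps_value av (fps_of_poly P) z = poly P z"
    using pCons.IH by auto
  have c: "av c \<le> 1" using pCons.prems[of 0] by simp
  have pCons_eq: "fps_of_poly (pCons c P) = fps_const c + fps_X * fps_of_poly P"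
    by (simp add: fps_of_poly_pCons mult.commute)
  show ?case
    unfolding pCons_eq using IH c assms(2)
    by (simp add: integral_fps_add integral_fps_const integral_fps_mult fps_value_add
        fps_value_const fps_value_X_mult del: fps_of_poly_pCons)
qed (use assms(2) in simp)

section \<open>Weierstrass preparation\<close>

lemma fps_coeffwise_limit:
  fixes Ws :: "nat \<Rightarrow> 'a fps"
  assumes e: "e < 1" and step: "\<And>k n. av ((Ws (Suc k) - Ws k) $ n) \<le> e ^ Suc k"
  obtains W where "\<And>n k. av (W $ n - Ws k $ n) \<le> e ^ k"
proof -
  have e0: "0 \<le> e" using order_trans[OF av_nonneg step[of 0 0]] by simp
  have cauchy: "av ((Ws m - Ws k) $ n) \<le> e ^ k" if "k \<le> m" for k m n
    using that
  proof (induction m rule: dec_induct)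
    case (step m)
    have "av ((Ws (Suc m) - Ws m) $ n) \<le> e ^ k"
      using assms(2)[of m n] power_decreasing[of k "Suc m" e] step e0 e by linarith
    moreover have "(Ws (Suc m) - Ws k) $ n = (Ws (Suc m) - Ws m) $ n + (Ws m - Ws k) $ n" by simp
    ultimately show ?case using av_add_le step.IH by metis
  qed (use e0 in simp)
  have "\<exists>L. \<forall>k. av (L - Ws k $ n) \<le> e ^ k" for n
  proof -
    obtain L where "\<And>k. av (L - Ws k $ n) \<le> e ^ k"
      by (rule geometric_cauchy_limit[OF e, of "\<lambda>k. Ws k $ n"]) (use cauchy in auto)
    then show ?thesis by blast
  qed
  then obtain L where "\<And>n k. av (L n - Ws k $ n) \<le> e ^ k" by metis
  then show ?thesis by (intro that[of "Abs_fps L"]) simp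
qed

lemma fps_contraction_fixpoint:
  fixes T :: "'a fps \<Rightarrow> 'a fps"
  assumes e: "e < 1"
    and T_diff: "\<And>Y Z. T Y - T Z = T (Y - Z)"
    and T_contract: "\<And>Y r n. 0 \<le> r \<Longrightarrow> (\<And>m. av (Y $ m) \<le> r) \<Longrightarrow> av (T Y $ n) \<le> e * r"
  obtains W where "integral_fps av W" and "W = 1 - T W"
proof -
  have one: "av ((1 :: 'a fps) $ m) \<le> 1" for m by simp
  have e0: "0 \<le> e"
    using T_contract[where Y = 1 and r = 1 and n = 0, OF zero_le_one one] av_nonneg[of "T 1 $ 0"]
    by linarith
  define Ws where "Ws k = ((\<lambda>Y. 1 - T Y) ^^ k) 1" for k
  have Ws_Suc: "Ws (Suc k) = 1 - T (Ws k)" for k by (simp add: Ws_def)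
  have "av ((Ws (Suc k) - Ws k) $ n) \<le> e ^ Suc k" for k n
  proof (induction k arbitrary: n)
    case 0
    have "Ws (Suc 0) - Ws 0 = - T 1" by (simp add: Ws_def)
    then show ?case using T_contract[where Y = 1 and r = 1 and n = n, OF zero_le_one one] by simp
  next
    case (Suc k)
    have "Ws (Suc (Suc k)) - Ws (Suc k) = - T (Ws (Suc k) - Ws k)"
      by (simp add: Ws_Suc flip: T_diff)
    then show ?case
      using T_contract[where Y = "Ws (Suc k) - Ws k" and r = "e ^ Suc k" and n = n] Suc e0 by simp
  qed
  then obtain W where W_approx: "\<And>n k. av (W $ n - Ws k $ n) \<le> e ^ k"
    using fps_coeffwise_limit[OF e] by blast
  have "integral_fps av W"
  proof (rule integral_fpsI)
    fix n
    have "W $ n = (W $ n - Ws 0 $ n) + (1 :: 'a fps) $ n" by (simp add: Ws_def)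
    then show "av (W $ n) \<le> 1" using av_add_le[OF _ one] W_approx[of n 0] by (metis power_0)
  qed
  moreover have "W = 1 - T W"
  proof (rule fps_ext)
    fix n
    have "av (W $ n - (1 - T W) $ n) \<le> e ^ k" for k
    proof -
      have "W $ n - (1 - T W) $ n = (W $ n - Ws (Suc k) $ n) + T (W - Ws k) $ n"
        by (simp add: Ws_Suc flip: T_diff)
      moreover have "av (T (W - Ws k) $ n) \<le> e * e ^ k"
        using T_contract[where Y = "W - Ws k" and r = "e ^ k" and n = n] W_approx e0 by simp
      moreover have "e * e ^ k \<le> e ^ k" using e e0 by (simp add: mult_left_le_one_le)
      ultimately show ?thesis using W_approx[of n "Suc k"] av_add_le
        by (metis order_trans power_Suc)
    qed
    then show "W $ n = (1 - T W) $ n"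
      using av_le_powers_imp_zero[of "W $ n - (1 - T W) $ n" e] e by simp
  qed
  ultimately show ?thesis by (rule that)
qed

lemma av_fps_shift_mult_le:
  assumes "0 \<le> e" "\<And>n. av (C $ n) \<le> e" "0 \<le> r" "\<And>m. av (Y $ m) \<le> r"
  shows "av (fps_shift d (Y * C) $ n) \<le> e * r"
  unfolding fps_shift_nth fps_mult_nth
proof (rule av_sum_le)
  fix i
  have "av (Y $ i) * av (C $ (n + d - i)) \<le> r * e"
    using assms by (intro mult_mono) auto
  then show "av (Y $ i * C $ (n + d - i)) \<le> e * r" by (simp add: mult.commute)
qed (use assms in simp)

text \<open>
  The normaliser is \<open>V = W / B\<close>, where \<open>h = A + X\<^sup>d B\<close> splits off the low-order part \<open>A\<close>, whose
  coefficients are small, and the contraction principle gives \<open>W = 1 - (W A / B) div X\<^sup>d\<close>;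
  then \<open>V h = W A / B + X\<^sup>d W\<close> has tail \<open>X\<^sup>d\<close>.
\<close>

lemma weierstrass_normaliser:
  assumes h: "integral_fps av h" and hd: "av (h $ d) = 1" and hl: "\<And>i. i < d \<Longrightarrow> av (h $ i) < 1"
  obtains V where "integral_fps av V" "av (V $ 0) = 1"
    "\<And>n. d \<le> n \<Longrightarrow> (V * h) $ n = (if n = d then 1 else 0)"
    "\<And>n. n < d \<Longrightarrow> av ((V * h) $ n) < 1"
proof -
  define e where "e = Max (insert 0 ((\<lambda>i. av (h $ i)) ` {..<d}))"
  have e0: "0 \<le> e" and e1: "e < 1" using hl by (auto simp: e_def Max_less_iff)
  define A :: "'a fps" where "A = Abs_fps (\<lambda>i. if i < d then h $ i else 0)"
  define B where "B = fps_shift d h"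
  have hAB: "h = A + fps_X ^ d * B"
    by (rule fps_ext) (simp add: A_def B_def fps_X_power_mult_nth)
  have A: "av (A $ i) \<le> e" for i
    using e0 by (auto simp: A_def e_def intro: Max_ge)
  have B: "integral_fps av (inverse B)" "av (inverse B $ 0) = 1" "inverse B * B = 1"
    using h hd by (simp_all add: B_def integral_fps_shift integral_fps_inverse inverse_mult_eq_1
      flip: av_eq_0_iff)
  define C where "C = inverse B * A"
  have C: "av (C $ n) \<le> e" for n
    unfolding C_def fps_mult_nth by (intro av_sum_le av_mult_le integral_fps_nth B(1) A e0)
  define T where "T Y = fps_shift d (Y * C)" for Y :: "'a fps"
  have T_contract: "av (T Y $ n) \<le> e * r" if "0 \<le> r" "\<And>m. av (Y $ m) \<le> r" for Y r n
    unfolding T_def by (rule av_fps_shift_mult_le[OF e0 C that])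
  have T_diff: "T Y - T Z = T (Y - Z)" for Y Z
    by (simp add: T_def fps_shift_diff algebra_simps)
  obtain W where W: "integral_fps av W" "W = 1 - T W"
    by (rule fps_contraction_fixpoint[OF e1 T_diff T_contract])
  have "av (- T W $ 0) < av (1 :: 'a)"
    using T_contract[of 1 W 0] W(1) e1 by (simp add: integral_fps_nth)
  then have W0: "av (W $ 0) = 1"
    using av_add_eq_right[of "- T W $ 0" 1] arg_cong[OF W(2), of "\<lambda>F. F $ 0"] by simp
  define V where "V = W * inverse B"
  have Vh: "V * h = W * C + W * fps_X ^ d"
    unfolding V_def C_def hAB using B(3) by (simp add: algebra_simps)
  have Vh_tail: "fps_shift d (V * h) = 1"
    using W(2) by (simp add: Vh T_def fps_shift_add algebra_simps)
  have "(V * h) $ n = (if n = d then 1 else 0)" if "d \<le> n" for n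
  proof -
    have "(V * h) $ n = fps_shift d (V * h) $ (n - d)" using that by simp
    then show ?thesis using that by (auto simp: Vh_tail)
  qed
  moreover have "av ((V * h) $ n) < 1" if "n < d" for n
    unfolding fps_mult_nth using that integral_fps_mult[OF W(1) B(1)]
    by (intro av_sum_less av_mult_less hl) (simp_all add: V_def integral_fps_nth)
  moreover have "integral_fps av V" "av (V $ 0) = 1"
    using W(1) B(1,2) W0 by (simp_all add: V_def integral_fps_mult)
  ultimately show ?thesis using that by blast
qed

end

lemma wideg_eq_enat_iff: "wideg av h = enat d \<longleftrightarrow> \<not> av (h $ d) < 1 \<and> (\<forall>i<d. av (h $ i) < 1)"
proof
  assume wd: "wideg av h = enat d"
  then have ex: "\<exists>n. \<not> av (h $ n) < 1" by (auto simp: wideg_def split: if_splits)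
  then have "d = (LEAST n. \<not> av (h $ n) < 1)" using wd by (simp add: wideg_def)
  then show "\<not> av (h $ d) < 1 \<and> (\<forall>i<d. av (h $ i) < 1)"
    using LeastI_ex[OF ex] not_less_Least by blast
next
  assume "\<not> av (h $ d) < 1 \<and> (\<forall>i<d. av (h $ i) < 1)"
  moreover from this have "(LEAST n. \<not> av (h $ n) < 1) = d"
    by (intro Least_equality) (auto simp: not_less[symmetric])
  ultimately show "wideg av h = enat d" by (auto simp: wideg_def)
qed

lemma fps_of_poly_from_monic_tail:
  fixes F :: "'a::comm_ring_1 fps"
  assumes "\<And>n. d \<le> n \<Longrightarrow> F $ n = (if n = d then 1 else 0)"
  obtains P where "fps_of_poly P = F" "degree P = d" "coeff P d = 1"
proof -
  define P where "P = Poly (map (\<lambda>i. F $ i) [0..<Suc d])"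
  have coeff_P: "coeff P i = F $ i" for i
    using assms[of i] by (cases "i < Suc d") (simp_all del: upt_Suc add: P_def nth_default_def)
  have "coeff P d = 1" using assms[of d] coeff_P by simp
  moreover have "degree P = d"
    using assms coeff_P \<open>coeff P d = 1\<close> by (intro antisym degree_le le_degree) auto
  moreover have "fps_of_poly P = F" by (rule fps_ext) (simp add: coeff_P)
  ultimately show ?thesis using that by blast
qed

lemma monic_poly_splits:
  fixes P :: "'a::field poly"
  assumes algcl: "alg_closed_field TYPE('a)" and monic: "lead_coeff P = 1"
  shows "\<exists>r. P = (\<Prod>i<degree P. [:- r i, 1:])"
  using monic
proof (induction "degree P" arbitrary: P)
  case 0
  have "P = [:coeff P 0:]" using 0(1)[symmetric] by (rule degree_eq_zeroE) simp
  then have "P = 1" using 0 by (simp add: one_pCons)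
  then show ?case by simp
next
  case (Suc n)
  obtain x where "poly P x = 0"
    using algcl[unfolded alg_closed_field_def, rule_format, of P] Suc.hyps(2) by auto
  then obtain Q where PQ: "P = [:- x, 1:] * Q" by (metis dvdE poly_eq_0_iff_dvd)
  have "lead_coeff P = lead_coeff [:- x, 1:] * lead_coeff Q" unfolding PQ by (rule lead_coeff_mult)
  then have lQ: "lead_coeff Q = 1" using Suc.prems by simp
  then have "Q \<noteq> 0" by auto
  then have "degree Q = n" using PQ Suc.hyps(2) degree_mult_eq[of "[:- x, 1:]" Q] by simp
  then obtain r where r: "Q = (\<Prod>i<n. [:- r i, 1:])"
    using Suc.hyps(1) lQ by metis
  have "P = (\<Prod>i<Suc n. [:- (r(n := x)) i, 1:])"
    using PQ r by (simp add: mult.commute)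
  then show ?case unfolding Suc.hyps(2)[symmetric] by blast
qed

context ultrametric_field
begin

lemma weierstrass_preparation:
  assumes h: "integral_fps av h" and wd: "wideg av h = enat d"
  obtains U P where "integral_fps av U" "av (U $ 0) = 1" "\<And>i. av (coeff P i) \<le> 1"
    "\<And>i. i < d \<Longrightarrow> av (coeff P i) < 1" "degree P = d" "coeff P d = 1" "h = U * fps_of_poly P"
proof -
  have hd: "av (h $ d) = 1" and hl: "\<And>i. i < d \<Longrightarrow> av (h $ i) < 1"
    using wd integral_fps_nth[OF h, of d] by (auto simp: wideg_eq_enat_iff)
  obtain V where V: "integral_fps av V" "av (V $ 0) = 1"
    "\<And>n. d \<le> n \<Longrightarrow> (V * h) $ n = (if n = d then 1 else 0)" "\<And>n. n < d \<Longrightarrow> av ((V * h) $ n) < 1"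
    using weierstrass_normaliser[OF h hd hl] by blast
  obtain P where P: "fps_of_poly P = V * h" "degree P = d" "coeff P d = 1"
    using fps_of_poly_from_monic_tail[OF V(3)] by blast
  have V0: "V $ 0 \<noteq> 0" using V(2) by auto
  have "h = inverse V * fps_of_poly P"
    using P(1) inverse_mult_eq_1[OF V0] by (metis mult.assoc mult_1)
  moreover have "av (coeff P i) \<le> 1" for i
    using integral_fps_mult[OF V(1) h] P(1) by (metis fps_of_poly_nth integral_fps_nth)
  moreover have "av (coeff P i) < 1" if "i < d" for i
    using V(4)[OF that] P(1) by (metis fps_of_poly_nth)
  moreover have "integral_fps av (inverse V)" "av (inverse V $ 0) = 1"
    using V(1,2) by (simp_all add: integral_fps_inverse)
  ultimately show ?thesis using that P(2,3) by blast
qed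

lemma monic_poly_no_unit_root:
  assumes small: "\<And>i. i < degree P \<Longrightarrow> av (coeff P i) < 1" and monic: "lead_coeff P = 1"
    and x: "1 \<le> av x"
  shows "poly P x \<noteq> 0"
proof -
  let ?d = "degree P"
  have "poly P x = (\<Sum>i<?d. coeff P i * x ^ i) + x ^ ?d"
    unfolding poly_altdef by (simp add: monic lessThan_Suc_atMost[symmetric])
  moreover have "av (\<Sum>i<?d. coeff P i * x ^ i) < av (x ^ ?d)"
  proof (rule av_sum_less)
    fix i assume i: "i \<in> {..<?d}"
    have "av (coeff P i) * av x ^ i < 1 * av x ^ ?d"
      using i small x by (intro mult_less_le_imp_less power_increasing zero_less_power) auto
    then show "av (coeff P i * x ^ i) < av (x ^ ?d)" by simp
  qed (use x in \<open>simp only: av_power, intro zero_less_power, linarith\<close>)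
  ultimately have "av (poly P x) = av (x ^ ?d)" using av_add_eq_right by simp
  then show ?thesis using x by auto
qed

lemma weierstrass_roots:
  assumes algcl: "alg_closed_field TYPE('a)"
    and h: "integral_fps av h" and wd: "wideg av h = enat d"
  obtains r where "\<And>i. i < d \<Longrightarrow> av (r i) < 1"
    and "\<And>z. av z < 1 \<Longrightarrow> fps_value av h z = 0 \<longleftrightarrow> (\<exists>i<d. z = r i)"
    and "av (h $ 0) = (\<Prod>i<d. av (r i))"
proof -
  obtain U P where U: "integral_fps av U" "av (U $ 0) = 1"
    and P: "\<And>i. av (coeff P i) \<le> 1" "\<And>i. i < d \<Longrightarrow> av (coeff P i) < 1" "degree P = d"
      "coeff P d = 1" and hUP: "h = U * fps_of_poly P"
    using weierstrass_preparation[OF h wd] by blast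
  obtain r where r: "P = (\<Prod>i<d. [:- r i, 1:])"
    using monic_poly_splits[OF algcl, of P] P(3,4) by auto
  have poly_P: "poly P z = (\<Prod>i<d. z - r i)" for z unfolding r poly_prod by simp
  have "av (r i) < 1" if "i < d" for i
    using monic_poly_no_unit_root[of P "r i"] P(2-4) that poly_P by fastforce
  moreover have h_value: "fps_value av h z = fps_value av U z * poly P z" if "av z < 1" for z
    using fps_value_mult[OF U(1) conjunct1[OF fps_value_poly[OF P(1) that]] that]
      fps_value_poly[OF P(1) that] hUP by simp
  moreover have "fps_value av h z = 0 \<longleftrightarrow> (\<exists>i<d. z = r i)" if "av z < 1" for z
    using fps_value_unit[OF U that] h_value[OF that] by (auto simp: poly_P)
  moreover have "av (h $ 0) = (\<Prod>i<d. av (r i))"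
    using h_value[of 0] fps_value_at_0[OF h] fps_value_at_0[OF U(1)] U(2) poly_P[of 0]
    by (simp add: av_prod)
  ultimately show ?thesis using that by blast
qed

lemma fps_value_deriv_mult_eq_0:
  assumes A: "integral_fps av A" and B: "integral_fps av B" and z: "av z < 1"
    and "fps_value av A z = 0" "fps_value av B z = 0"
  shows "fps_value av (fps_deriv (A * B)) z = 0"
  using assms
  by (simp add: fps_value_add fps_value_mult integral_fps_deriv integral_fps_mult mult.commute)

end

section \<open>Exact periods\<close>

definition exact_period :: "('b \<Rightarrow> 'b) \<Rightarrow> nat \<Rightarrow> 'b \<Rightarrow> bool" where
  "exact_period g m z \<longleftrightarrow> 1 \<le> m \<and> (g ^^ m) z = z \<and> (\<forall>k. 1 \<le> k \<and> k < m \<longrightarrow> (g ^^ k) z \<noteq> z)"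

lemma funpow_period_mult: "(g ^^ a) z = z \<Longrightarrow> (g ^^ (a * t)) z = z"
  by (induction t) (simp_all add: funpow_add)

lemma funpow_period_gcd:
  assumes a: "(g ^^ a) z = z" and b: "(g ^^ b) z = z"
  shows "(g ^^ gcd a b) z = z"
proof (cases "a = 0")
  case False
  then obtain x y where xy: "a * x = b * y + gcd a b" using bezout_nat by blast
  have "(g ^^ gcd a b) z = (g ^^ gcd a b) ((g ^^ (b * y)) z)"
    using funpow_period_mult[OF b] by simp
  also have "\<dots> = (g ^^ (a * x)) z" by (simp add: xy funpow_add add.commute)
  finally show ?thesis using funpow_period_mult[OF a] by simp
qed (use b in simp)

lemma exact_periodI:
  assumes "1 \<le> m" "(g ^^ m) z = z"
    and "\<And>k. 1 \<le> k \<Longrightarrow> k < m \<Longrightarrow> k dvd m \<Longrightarrow> (g ^^ k) z \<noteq> z"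
  shows "exact_period g m z"
  unfolding exact_period_def
proof (intro conjI allI impI notI)
  fix k assume k: "1 \<le> k \<and> k < m" and "(g ^^ k) z = z"
  then have "(g ^^ gcd k m) z = z" using funpow_period_gcd assms(2) by metis
  moreover have "1 \<le> gcd k m" "gcd k m < m" using k
    by (simp_all add: Suc_le_eq le_less_trans[OF gcd_le1_nat])
  ultimately show False using assms(3) by simp
qed (use assms in auto)

lemma funpow_commute: "(g ^^ k) ((g ^^ j) x) = (g ^^ j) ((g ^^ k) x)"
proof -
  have "(g ^^ k) ((g ^^ j) x) = (g ^^ (k + j)) x" by (simp add: funpow_add)
  also have "\<dots> = (g ^^ (j + k)) x" by (simp add: add.commute)
  finally show ?thesis by (simp add: funpow_add)
qed

lemma exact_period_funpow:
  assumes "exact_period g m z"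
  shows "exact_period g m ((g ^^ i) z)"
proof -
  have m: "1 \<le> m" "(g ^^ m) z = z" using assms by (simp_all add: exact_period_def)
  have "(g ^^ (m * i - i)) ((g ^^ i) z) = (g ^^ (m * i - i + i)) z" by (simp add: funpow_add)
  also have "m * i - i + i = m * i" using m(1) by simp
  finally have z: "(g ^^ (m * i - i)) ((g ^^ i) z) = z" using funpow_period_mult[OF m(2)] by simp
  have "(g ^^ k) z = z" if "(g ^^ k) ((g ^^ i) z) = (g ^^ i) z" for k
    using z funpow_commute[where g = g and k = k and j = "m * i - i" and x = "(g ^^ i) z"] that
      by simp
  moreover have "(g ^^ m) ((g ^^ i) z) = (g ^^ i) z"
    using m(2) funpow_commute[where g = g and k = m and j = i and x = z] by simp
  ultimately show ?thesis using assms unfolding exact_period_def by blast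
qed

lemma orbit_eq_image:
  assumes "exact_period g m z"
  shows "{(g ^^ k) z | k. True} = (\<lambda>i. (g ^^ i) z) ` {..<m}"
proof -
  have "(g ^^ k) z \<in> (\<lambda>i. (g ^^ i) z) ` {..<m}" for k
    using assms funpow_mod_eq[where f = g and n = m and x = z, of k]
    by (intro image_eqI[of _ _ "k mod m"]) (auto simp: exact_period_def)
  then show ?thesis by auto
qed

lemma card_orbit:
  assumes "exact_period g m z"
  shows "card ((\<lambda>i. (g ^^ i) z) ` {..<m}) = m"
  using assms inj_on_funpow_least[where f = g and n = m and s = z]
  by (simp add: exact_period_def card_image lessThan_atLeast0)

lemma dvd_prime_power_pred:
  fixes p q m n :: nat
  assumes p: "prime p" and m: "m dvd q * p ^ n" "q dvd m" "m < q * p ^ n"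
  shows "m dvd q * p ^ (n - 1)"
proof -
  obtain e where e: "m = q * e" using m(2) by blast
  have "q \<noteq> 0" using m(3) by (cases q) auto
  then have "e dvd p ^ n" using m(1) e by simp
  then obtain i where i: "i \<le> n" "e = p ^ i" using divides_primepow_nat[OF p] by blast
  have "i \<noteq> n" using m(3) e i by auto
  then have "e dvd p ^ (n - 1)" using i by (simp add: le_imp_power_dvd)
  then show ?thesis using e by simp
qed

section \<open>Iterates of power series\<close>

lemma fps_iter_0 [simp]: "fps_iter f 0 = fps_X"
  by (simp add: fps_iter_def)

lemma fps_iter_Suc: "fps_iter f (Suc n) = f oo fps_iter f n"
  by (simp add: fps_iter_def)

lemma fps_iter_nth_0: "f $ 0 = 0 \<Longrightarrow> fps_iter f n $ 0 = 0"
  by (induction n) (simp_all add: fps_iter_Suc)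

lemma fps_iter_nth_1: "(f :: 'a::field fps) $ 0 = 0 \<Longrightarrow> fps_iter f n $ 1 = (f $ 1) ^ n"
  by (induction n) (simp_all add: fps_iter_Suc fps_compose_nth)

lemma fps_iter_add:
  "(f :: 'a::field fps) $ 0 = 0 \<Longrightarrow> fps_iter f (m + k) = fps_iter f m oo fps_iter f k"
  by (induction m) (simp_all add: fps_iter_Suc fps_compose_assoc fps_iter_nth_0)

lemma fps_power_mult_nth_eq_0:
  fixes A B :: "'a::field fps"
  assumes "A $ 0 = 0" "B $ 0 = 0" "n < a + b"
  shows "(B ^ b * A ^ a) $ n = 0"
  unfolding fps_mult_nth
proof (rule sum.neutral, intro ballI)
  fix i assume "i \<in> {0..n}"
  then show "(B ^ b) $ i * (A ^ a) $ (n - i) = 0"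
    using startsby_zero_power_prefix[OF assms(1)] startsby_zero_power_prefix[OF assms(2)] assms(3)
    by (cases "i < b") auto
qed

lemma fps_compose_diff_nth:
  fixes F A B :: "'a::field fps"
  assumes A: "A $ 0 = 0" and B: "B $ 0 = 0"
  shows "((F oo A) - (F oo B)) $ n = (\<Sum>k\<le>n. fps_const (F $ Suc k) * (A ^ Suc k - B ^ Suc k)) $ n"
proof -
  have "(\<Sum>k\<le>n. fps_const (F $ Suc k) * (A ^ Suc k - B ^ Suc k)) $ n
      = (\<Sum>i\<le>Suc n. F $ i * ((A ^ i) $ n - (B ^ i) $ n))"
    unfolding sum.atMost_Suc_shift
    using startsby_zero_power_prefix[OF A, of "Suc n"] startsby_zero_power_prefix[OF B, of "Suc n"]
    by (simp add: fps_sum_nth del: sum.atMost_Suc)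
  also have "\<dots> = ((F oo A) - (F oo B)) $ n"
    using startsby_zero_power_prefix[OF A, of "Suc n"] startsby_zero_power_prefix[OF B, of "Suc n"]
    by (simp add: fps_compose_nth atLeast0AtMost sum_subtractf algebra_simps)
  finally show ?thesis ..
qed

context ultrametric_field
begin

lemma integral_fps_iter: "integral_fps av f \<Longrightarrow> integral_fps av (fps_iter f n)"
  by (induction n) (simp_all add: fps_iter_Suc integral_fps_compose)

lemma fps_value_iter:
  assumes "integral_fps av f" "f $ 0 = 0" "av z < 1"
  shows "fps_value av (fps_iter f n) z = (fps_value av f ^^ n) z"
  by (induction n)
    (simp_all add: assms fps_iter_Suc fps_value_compose integral_fps_iter fps_iter_nth_0)

lemma av_fps_value_eq:
  assumes "integral_fps av G" "G $ 0 = 0" "av (G $ 1) = 1" "av w < 1"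
  shows "av (fps_value av G w) = av w"
  using fps_value_eq_nth_0_plus[OF assms(1,4)]
    fps_value_unit[OF integral_fps_shift[OF assms(1)] _ assms(4)]
    assms(2,3) by simp

lemma fps_value_ne_self:
  assumes "integral_fps av G" "G $ 0 = 0" "av (G $ 1 - 1) = 1" "av w < 1" "w \<noteq> 0"
  shows "fps_value av G w \<noteq> w"
proof -
  have GX: "integral_fps av (G - fps_X)" using assms(1) by (simp add: integral_fps_diff)
  have "fps_value av G w - w = w * fps_value av (fps_shift 1 (G - fps_X)) w"
    using fps_value_eq_nth_0_plus[OF GX assms(4)] fps_value_diff[OF assms(1) _ assms(4)] assms(2,4)
    by simp
  moreover have "fps_value av (fps_shift 1 (G - fps_X)) w \<noteq> 0"
    using fps_value_unit[OF integral_fps_shift[OF GX, of 1] _ assms(4)] assms(3) by fastforce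
  ultimately show ?thesis using assms(5) by auto
qed

text \<open>
  \<open>D\<close> is the sum of \<open>F\<^sub>k\<^sub>+\<^sub>1 (A\<^sup>k\<^sup>+\<^sup>1 - B\<^sup>k\<^sup>+\<^sup>1) / (A - B)\<close>, which converges coefficientwise
  because the \<open>k\<close>-th quotient has order at least \<open>k\<close>.
\<close>

lemma fps_compose_diff_factor:
  fixes F A B :: "'a fps"
  assumes F: "integral_fps av F" and A: "integral_fps av A" "A $ 0 = 0"
    and B: "integral_fps av B" "B $ 0 = 0"
  obtains D where "integral_fps av D" "(F oo A) - (F oo B) = (A - B) * D"
proof -
  define S where "S k = (\<Sum>i<Suc k. B ^ (k - i) * A ^ i)" for k
  define Dm where "Dm M = (\<Sum>k<M. fps_const (F $ Suc k) * S k)" for M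
  have "integral_fps av (S k)" for k
    unfolding S_def by (intro integral_fps_sum integral_fps_mult integral_fps_power A B)
  then have Dm: "integral_fps av (Dm M)" for M
    unfolding Dm_def
      by (intro integral_fps_sum integral_fps_mult integral_fps_const integral_fps_nth F)
  have S_low: "S k $ n = 0" if "n < k" for k n
    unfolding S_def fps_sum_nth using that fps_power_mult_nth_eq_0[OF A(2) B(2)]
      by (intro sum.neutral) auto
  have Dm_stable: "Dm M $ n = Dm (Suc n) $ n" if "Suc n \<le> M" for M n
  proof -
    have "Dm M = Dm (Suc n) + (\<Sum>k\<in>{Suc n..<M}. fps_const (F $ Suc k) * S k)"
      unfolding Dm_def
      using sum.atLeastLessThan_concat[of 0 "Suc n" M "\<lambda>k. fps_const (F $ Suc k) * S k"] that
      by (simp add: lessThan_atLeast0)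
    moreover have "(\<Sum>k\<in>{Suc n..<M}. fps_const (F $ Suc k) * S k) $ n = 0"
      unfolding fps_sum_nth by (rule sum.neutral) (auto simp: S_low)
    ultimately show ?thesis by simp
  qed
  define D where "D = Abs_fps (\<lambda>n. Dm (Suc n) $ n)"
  have "((A - B) * D) $ n = ((F oo A) - (F oo B)) $ n" for n
  proof -
    have "((A - B) * D) $ n = ((A - B) * Dm (Suc n)) $ n"
      unfolding fps_mult_nth D_def fps_nth_Abs_fps
      by (intro sum.cong refl) (simp add: Dm_stable[of _ "Suc n"])
    also have "(A - B) * Dm (Suc n) = (\<Sum>k\<le>n. fps_const (F $ Suc k) * (A ^ Suc k - B ^ Suc k))"
      unfolding Dm_def S_def power_diff_sumr2 lessThan_Suc_atMost[symmetric]
      by (simp add: sum_distrib_left algebra_simps)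
    finally show ?thesis by (simp only: fps_compose_diff_nth[OF A(2) B(2)])
  qed
  then have "(F oo A) - (F oo B) = (A - B) * D" by (intro fps_ext) simp
  moreover have "integral_fps av D"
    unfolding D_def by (rule integral_fpsI) (simp add: integral_fps_nth[OF Dm])
  ultimately show ?thesis using that by blast
qed

lemma fps_iter_mult_minus_X_factor:
  assumes f: "integral_fps av f" "f $ 0 = 0"
  obtains C where "integral_fps av C" "fps_iter f (a * t) - fps_X = (fps_iter f a - fps_X) * C"
proof -
  have "\<exists>C. integral_fps av C \<and> fps_iter f (a * t) - fps_X = (fps_iter f a - fps_X) * C"
  proof (induction t)
    case (Suc t)
    then obtain C where C: "integral_fps av C"
      "fps_iter f (a * t) - fps_X = (fps_iter f a - fps_X) * C"
      by blast
    obtain D where D: "integral_fps av D"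
      "(fps_iter f a oo fps_iter f (a * t)) - fps_iter f a = (fps_iter f (a * t) - fps_X) * D"
      using fps_compose_diff_factor
        [where F = "fps_iter f a" and A = "fps_iter f (a * t)" and B = fps_X]
      by (auto simp: f integral_fps_iter fps_iter_nth_0)
    have "fps_iter f (a * Suc t) - fps_X
        = ((fps_iter f a oo fps_iter f (a * t)) - fps_iter f a) + (fps_iter f a - fps_X)"
      by (simp add: fps_iter_add[OF f(2), symmetric])
    also have "\<dots> = (fps_iter f a - fps_X) * (C * D + 1)"
      using D(2) C(2) by (simp add: algebra_simps)
    finally show ?case using C(1) D(1)
      by (intro exI[of _ "C * D + 1"]) (simp add: integral_fps_add integral_fps_mult)
  qed (auto intro: exI[of _ 0])
  then show ?thesis using that by blast
qed

lemma unique_cycle_from_roots: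
  assumes algcl: "alg_closed_field TYPE('a)" and C: "integral_fps av C" "wideg av C = enat d"
    and d: "1 \<le> d"
    and roots: "\<And>z. av z < 1 \<Longrightarrow> fps_value av C z = 0 \<longleftrightarrow> z \<noteq> 0 \<and> exact_period g d z"
    and isometry: "\<And>z k. av z < 1 \<Longrightarrow> av ((g ^^ k) z) = av z"
  obtains z0 where "av z0 < 1" "z0 \<noteq> 0" "exact_period g d z0" "av z0 ^ d = av (C $ 0)"
    "\<And>w. av w < 1 \<Longrightarrow> w \<noteq> 0 \<Longrightarrow> exact_period g d w \<Longrightarrow> w \<in> {(g ^^ k) z0 | k. True}"
proof -
  obtain r where r: "\<And>i. i < d \<Longrightarrow> av (r i) < 1"
    "\<And>z. av z < 1 \<Longrightarrow> fps_value av C z = 0 \<longleftrightarrow> (\<exists>i<d. z = r i)" "av (C $ 0) = (\<Prod>i<d. av (r i))"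
    using weierstrass_roots[OF algcl C] by blast
  have root_iff: "z \<noteq> 0 \<and> exact_period g d z \<longleftrightarrow> z \<in> r ` {..<d}" if "av z < 1" for z
    using roots[OF that] r(2)[OF that] by auto
  define z0 where "z0 = r 0"
  have z0: "av z0 < 1" "z0 \<noteq> 0 \<and> exact_period g d z0"
    using r(1)[of 0] root_iff[of z0] d unfolding z0_def by auto
  define Orb where "Orb = (\<lambda>i. (g ^^ i) z0) ` {..<d}"
  have "Orb \<subseteq> r ` {..<d}"
  proof
    fix y assume "y \<in> Orb"
    then obtain i where y: "y = (g ^^ i) z0" by (auto simp: Orb_def)
    then have "av y = av z0" using isometry[OF z0(1)] by simp
    moreover have "exact_period g d y"
      using exact_period_funpow[where g = g and m = d and z = z0 and i = i] z0(2) y by simp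
    moreover have "y \<noteq> 0" using \<open>av y = av z0\<close> z0(2) by auto
    ultimately show "y \<in> r ` {..<d}" using root_iff[of y] z0(1) by simp
  qed
  moreover have "card (r ` {..<d}) \<le> card Orb"
    using card_orbit[of g d z0] z0(2) card_image_le[of "{..<d}" r] by (simp add: Orb_def)
  ultimately have Orb: "Orb = r ` {..<d}"
    using card_mono[of "r ` {..<d}" Orb] by (intro card_subset_eq) auto
  have "av (r i) = av z0" if "i < d" for i
  proof -
    have "r i \<in> Orb" using Orb that by blast
    then show ?thesis using isometry[OF z0(1)] by (auto simp: Orb_def)
  qed
  then have "av (C $ 0) = (\<Prod>i<d. av z0)"
    unfolding r(3) by (intro prod.cong) auto
  moreover have "w \<in> {(g ^^ k) z0 | k. True}" if "av w < 1" "w \<noteq> 0" "exact_period g d w" for w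
    using root_iff[OF that(1)] that Orb orbit_eq_image[of g d z0] z0(2) by (auto simp: Orb_def)
  ultimately show ?thesis using that z0 by simp
qed

end

section \<open>Cycles of the germ\<close>

lemma power_powr_inverse: "0 \<le> (x::real) \<Longrightarrow> 0 < n \<Longrightarrow> (x ^ n) powr (1 / real n) = x"
  by (cases "x = 0") (simp_all add: powr_powr flip: powr_realpow)

lemma prime_power_period_step:
  fixes p q n :: nat
  assumes p: "prime p" and n: "1 \<le> n" and q: "1 \<le> q"
  shows "q * p ^ n = q * p ^ (n - 1) * p" "1 \<le> q * p ^ (n - 1)" "q * p ^ (n - 1) < q * p ^ n"
proof -
  obtain k where k: "n = Suc k" using n by (cases n) auto
  have p1: "1 < p" using prime_gt_1_nat[OF p] .
  have pos: "0 < q * p ^ k" using q p1 by simp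
  show "q * p ^ n = q * p ^ (n - 1) * p" by (simp add: k)
  show "1 \<le> q * p ^ (n - 1)" using pos by (simp add: k Suc_le_eq)
  show "q * p ^ (n - 1) < q * p ^ n" using mult_less_mono2[OF p1 pos] by (simp add: k mult_ac)
qed

locale rotation_germ = ultrametric_field av for av :: "'a::field \<Rightarrow> real" +
  fixes q :: nat and lam :: 'a and f :: "'a fps"
  assumes q_pos: "1 \<le> q"
    and lam_unit: "av lam = 1"
    and lam_order: "av (lam ^ q - 1) < 1"
    and lam_order_min: "\<forall>k. 1 \<le> k \<and> k < q \<longrightarrow> \<not> av (lam ^ k - 1) < 1"
    and f_integral: "integral_fps av f"
    and f_nth_0: "f $ 0 = 0"
    and f_nth_1: "f $ 1 = lam"
begin

abbreviation \<phi> :: "'a \<Rightarrow> 'a" where "\<phi> \<equiv> fps_value av f"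

lemma av_lam_power_minus_1_less_iff: "av (lam ^ m - 1) < 1 \<longleftrightarrow> q dvd m"
proof
  have multiple: "av (lam ^ (q * t) - 1) < 1" for t
  proof (induction t)
    case (Suc t)
    have split: "lam ^ (q * Suc t) - 1 = lam ^ (q * t) * (lam ^ q - 1) + (lam ^ (q * t) - 1)"
      by (simp add: algebra_simps power_add)
    have "av (lam ^ (q * t) * (lam ^ q - 1)) < 1" using lam_order lam_unit by simp
    then show ?case unfolding split using Suc by (rule av_add_less)
  qed simp
  then show "q dvd m \<Longrightarrow> av (lam ^ m - 1) < 1" by auto
  assume small: "av (lam ^ m - 1) < 1"
  define r t where "r = m mod q" and "t = m div q"
  have m: "m = q * t + r" by (simp add: r_def t_def)
  have split: "lam ^ r - 1 = (lam ^ m - 1) - lam ^ r * (lam ^ (q * t) - 1)"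
    unfolding m by (simp add: algebra_simps power_add)
  have "av (lam ^ r * (lam ^ (q * t) - 1)) < 1" using multiple lam_unit by simp
  then have r_small: "av (lam ^ r - 1) < 1" unfolding split by (rule av_diff_less[OF small])
  show "q dvd m"
  proof (rule ccontr)
    assume "\<not> q dvd m"
    then have "1 \<le> r" "r < q" using q_pos
      by (auto simp: r_def Suc_le_eq mod_greater_zero_iff_not_dvd)
    then show False using lam_order_min r_small by blast
  qed
qed

lemma av_lam_power_minus_1: "\<not> q dvd m \<Longrightarrow> av (lam ^ m - 1) = 1"
  using av_lam_power_minus_1_less_iff[of m] av_diff_le[of "lam ^ m" 1 1] lam_unit by simp

lemma fps_iter_f_nth_1 [simp]: "fps_iter f m $ Suc 0 = lam ^ m"
  using fps_iter_nth_1[OF f_nth_0] f_nth_1 by simp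

lemma fps_value_iter_f: "av z < 1 \<Longrightarrow> fps_value av (fps_iter f m) z = (\<phi> ^^ m) z"
  by (rule fps_value_iter[OF f_integral f_nth_0])

lemma av_funpow [simp]: "av z < 1 \<Longrightarrow> av ((\<phi> ^^ m) z) = av z"
  using av_fps_value_eq[OF integral_fps_iter[OF f_integral] fps_iter_nth_0[OF f_nth_0], of m z]
    lam_unit fps_value_iter_f by simp

lemma funpow_zero [simp]: "(\<phi> ^^ m) 0 = 0"
  using av_funpow[of 0 m] by (simp del: av_funpow)

lemma funpow_ne_self: "\<not> q dvd m \<Longrightarrow> av w < 1 \<Longrightarrow> w \<noteq> 0 \<Longrightarrow> (\<phi> ^^ m) w \<noteq> w"
  using fps_value_ne_self[OF integral_fps_iter[OF f_integral] fps_iter_nth_0[OF f_nth_0], of m w]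
    av_lam_power_minus_1 fps_value_iter_f by simp

lemma fps_value_iter_minus_X:
  "av z < 1 \<Longrightarrow> fps_value av (fps_iter f m - fps_X) z = (\<phi> ^^ m) z - z"
  using fps_value_diff[OF integral_fps_iter[OF f_integral] integral_fps_X] fps_value_iter_f by simp

lemma minimal_period_iff: "minimal_period av f m z \<longleftrightarrow> av z < 1 \<and> exact_period \<phi> m z"
  by (auto simp: minimal_period_def periodic_pt_def max_ideal_def exact_period_def)

lemma unique_optimal_cycle:
  assumes algcl: "alg_closed_field TYPE('a)" and C: "integral_fps av C" "wideg av C = enat d"
    and d: "1 \<le> d"
    and roots: "\<And>z. av z < 1 \<Longrightarrow> fps_value av C z = 0 \<longleftrightarrow> z \<noteq> 0 \<and> exact_period \<phi> d z"
  shows "(\<exists>z0. z0 \<noteq> 0 \<and> minimal_period av f d z0 \<and>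
           (\<forall>w. w \<noteq> 0 \<and> minimal_period av f d w \<longrightarrow> w \<in> orbit av f z0)) \<and>
         (\<forall>w. w \<noteq> 0 \<and> minimal_period av f d w \<longrightarrow> av w = av (C $ 0) powr (1 / real d))"
proof -
  obtain z0 where z0: "av z0 < 1" "z0 \<noteq> 0" "exact_period \<phi> d z0" "av z0 ^ d = av (C $ 0)"
    and cycle: "\<And>w. av w < 1 \<Longrightarrow> w \<noteq> 0 \<Longrightarrow> exact_period \<phi> d w \<Longrightarrow> w \<in> orbit av f z0"
    using unique_cycle_from_roots[OF algcl C d roots av_funpow] unfolding orbit_def by blast
  have "av w = av (C $ 0) powr (1 / real d)" if "w \<in> orbit av f z0" for w
    using that z0(1,4) d power_powr_inverse[of "av z0" d] by (auto simp: orbit_def)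
  then show ?thesis
    using z0 cycle unfolding minimal_period_iff by blast
qed

lemma cycle_of_period_q:
  assumes algcl: "alg_closed_field TYPE('a)"
    and wd: "wideg av (fps_iter f q - fps_X) = enat (q + 1)" and lam_q: "lam ^ q \<noteq> 1"
  shows "(\<exists>z0. z0 \<noteq> 0 \<and> minimal_period av f q z0 \<and>
           (\<forall>w. w \<noteq> 0 \<and> minimal_period av f q w \<longrightarrow> w \<in> orbit av f z0)) \<and>
         (\<forall>w. w \<noteq> 0 \<and> minimal_period av f q w \<longrightarrow> av w = av (lam ^ q - 1) powr (1 / real q))"
proof -
  define H where "H = fps_iter f q - fps_X"
  define C where "C = fps_shift 1 H"
  have H: "integral_fps av H" "H $ 0 = 0"
    using f_integral f_nth_0
      by (simp_all add: H_def integral_fps_diff integral_fps_iter fps_iter_nth_0)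
  have C: "integral_fps av C" "wideg av C = enat q" "C $ 0 = lam ^ q - 1"
    using H wd by (auto simp: C_def H_def integral_fps_shift wideg_eq_enat_iff)
  have "fps_value av C z = 0 \<longleftrightarrow> z \<noteq> 0 \<and> exact_period \<phi> q z" if z: "av z < 1" for z
  proof -
    have "(\<phi> ^^ q) z - z = z * fps_value av C z"
      using fps_value_eq_nth_0_plus[OF H(1) z] fps_value_iter_minus_X[OF z] H(2)
        by (simp add: C_def H_def)
    moreover have "fps_value av C 0 \<noteq> 0" using C lam_q by (simp add: fps_value_at_0)
    moreover have "(\<phi> ^^ k) z \<noteq> z" if "z \<noteq> 0" "1 \<le> k" "k < q" for k
    proof -
      have "\<not> q dvd k" using that(2,3) by (auto dest: dvd_imp_le)
      then show ?thesis using funpow_ne_self z that(1) by blast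
    qed
    ultimately show ?thesis using q_pos by (auto simp: exact_period_def)
  qed
  then show ?thesis using unique_optimal_cycle[OF algcl C(1,2) q_pos] C(3) by simp
qed

lemma iter_quotient_nonzero_at_fixed_point:
  assumes C: "integral_fps av C" and factor: "fps_iter f b - fps_X = (fps_iter f a - fps_X) * C"
    and der: "fps_value av (fps_deriv (fps_iter f b)) z \<noteq> 1"
    and z: "av z < 1" and fixed: "(\<phi> ^^ a) z = z"
  shows "fps_value av C z \<noteq> 0"
proof
  have g: "integral_fps av (fps_iter f a - fps_X)"
    by (simp add: f_integral integral_fps_diff integral_fps_iter)
  assume "fps_value av C z = 0"
  then have "fps_value av (fps_deriv ((fps_iter f a - fps_X) * C)) z = 0"
    using fps_value_deriv_mult_eq_0[OF g C z] fps_value_iter_minus_X[OF z] fixed by simp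
  moreover have "fps_deriv (fps_iter f b) = fps_deriv ((fps_iter f a - fps_X) * C) + 1"
    using arg_cong[OF factor, of fps_deriv] by (simp add: diff_eq_eq)
  ultimately have "fps_value av (fps_deriv (fps_iter f b)) z = 1"
    using fps_value_add[OF integral_fps_deriv[OF integral_fps_mult[OF g C]] integral_fps_1 z] z
    by simp
  then show False using der by simp
qed

lemma iter_quotient_nth_0:
  assumes factor: "fps_iter f b - fps_X = (fps_iter f a - fps_X) * C" and lam_a: "lam ^ a \<noteq> 1"
  shows "C $ 0 = (lam ^ b - 1) / (lam ^ a - 1)"
proof -
  have "(fps_iter f b - fps_X) $ Suc 0
      = (fps_iter f a - fps_X) $ 0 * C $ Suc 0 + (fps_iter f a - fps_X) $ Suc 0 * C $ 0"
    unfolding factor by simp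
  then have "lam ^ b - 1 = (lam ^ a - 1) * C $ 0" by (simp add: fps_iter_nth_0 f_nth_0)
  then show ?thesis using lam_a by (simp add: field_simps)
qed

lemma roots_of_iter_quotient:
  assumes p: "prime p" and n: "1 \<le> n" and C: "integral_fps av C" "C $ 0 \<noteq> 0"
    and factor: "fps_iter f (q * p ^ n) - fps_X = (fps_iter f (q * p ^ (n - 1)) - fps_X) * C"
    and der: "\<And>z0. periodic_pt av f (q * p ^ (n - 1)) z0 \<Longrightarrow>
                fps_value av (fps_deriv (fps_iter f (q * p ^ n))) z0 \<noteq> 1"
    and z: "av z < 1"
  shows "fps_value av C z = 0 \<longleftrightarrow> z \<noteq> 0 \<and> exact_period \<phi> (q * p ^ n) z"
proof -
  define a where "a = q * p ^ (n - 1)"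
  define b where "b = q * p ^ n"
  have ab: "1 \<le> a" "a < b"
    using prime_power_period_step[OF p n q_pos] by (simp_all add: a_def b_def)
  have g: "integral_fps av (fps_iter f a - fps_X)"
    by (simp add: f_integral integral_fps_diff integral_fps_iter)
  have N: "(\<phi> ^^ b) z - z = ((\<phi> ^^ a) z - z) * fps_value av C z"
    using factor fps_value_mult[OF g C(1) z] fps_value_iter_minus_X[OF z]
    unfolding a_def b_def by metis
  have C_at_fixed: "fps_value av C z \<noteq> 0" if "(\<phi> ^^ a) z = z"
    using iter_quotient_nonzero_at_fixed_point[OF C(1) factor[folded a_def b_def] _ z that]
      der[of z] that z
    by (simp add: a_def b_def periodic_pt_def max_ideal_def)
  show ?thesis
  proof
    assume root: "fps_value av C z = 0"
    then have "z \<noteq> 0" using C by (auto simp: fps_value_at_0)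
    moreover have "exact_period \<phi> b z"
    proof (rule exact_periodI)
      show "(\<phi> ^^ b) z = z" using N root by simp
      fix k assume k: "1 \<le> k" "k < b" "k dvd b"
      show "(\<phi> ^^ k) z \<noteq> z"
      proof
        assume fixed: "(\<phi> ^^ k) z = z"
        show False
        proof (cases "q dvd k")
          case True
          then obtain t where "a = k * t"
            using dvd_prime_power_pred[OF p] k unfolding a_def b_def by blast
          then have "(\<phi> ^^ a) z = z" using funpow_period_mult[OF fixed] by simp
          then show False using C_at_fixed root by simp
        qed (use funpow_ne_self z \<open>z \<noteq> 0\<close> fixed in blast)
      qed
    qed (use ab in simp)
    ultimately show "z \<noteq> 0 \<and> exact_period \<phi> (q * p ^ n) z" by (simp add: b_def)
  next
    assume "z \<noteq> 0 \<and> exact_period \<phi> (q * p ^ n) z"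
    then have "(\<phi> ^^ b) z = z" "(\<phi> ^^ a) z \<noteq> z"
      using ab by (auto simp: exact_period_def b_def)
    then show "fps_value av C z = 0" using N by simp
  qed
qed

lemma cycle_of_period_q_prime_power:
  assumes algcl: "alg_closed_field TYPE('a)" and p: "prime p" and n: "1 \<le> n"
    and wd: "wideg av ((fps_iter f (q * p ^ n) - fps_X) div (fps_iter f (q * p ^ (n - 1)) - fps_X))
               = enat (q * p ^ n)"
    and der: "\<forall>z0. periodic_pt av f (q * p ^ (n - 1)) z0 \<longrightarrow>
                fps_value av (fps_deriv (fps_iter f (q * p ^ n))) z0 \<noteq> 1"
  shows "(\<exists>z0. minimal_period av f (q * p ^ n) z0 \<and>
           (\<forall>w. minimal_period av f (q * p ^ n) w \<longrightarrow> w \<in> orbit av f z0)) \<and>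
         (\<forall>w. minimal_period av f (q * p ^ n) w \<longrightarrow>
           av w = av ((lam ^ (q * p ^ n) - 1) / (lam ^ (q * p ^ (n - 1)) - 1))
                   powr (1 / real (q * p ^ n)))"
proof -
  define a where "a = q * p ^ (n - 1)"
  define b where "b = q * p ^ n"
  have ab: "b = a * p" "1 \<le> a" "a < b"
    using prime_power_period_step[OF p n q_pos] by (simp_all add: a_def b_def)
  then have b: "1 < b" by linarith
  obtain C where C: "integral_fps av C"
    and factor: "fps_iter f b - fps_X = (fps_iter f a - fps_X) * C"
    using fps_iter_mult_minus_X_factor[OF f_integral f_nth_0, of a p] ab(1) by metis
  have "lam ^ b \<noteq> 1"
    using der[rule_format, of 0]
      fps_value_at_0[OF integral_fps_deriv[OF integral_fps_iter[OF f_integral]]]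
    by (simp add: b_def periodic_pt_def max_ideal_def)
  then have lam_a: "lam ^ a \<noteq> 1" using ab(1) by (metis power_mult power_one)
  have C0: "C $ 0 = (lam ^ b - 1) / (lam ^ a - 1)" by (rule iter_quotient_nth_0[OF factor lam_a])
  have "(fps_iter f a - fps_X) $ Suc 0 \<noteq> 0" using lam_a by simp
  then have "fps_iter f a - fps_X \<noteq> 0" by (metis fps_zero_nth)
  then have wd_C: "wideg av C = enat b"
    using wd factor by (simp add: a_def b_def)
  have roots: "fps_value av C z = 0 \<longleftrightarrow> z \<noteq> 0 \<and> exact_period \<phi> b z" if "av z < 1" for z
    using roots_of_iter_quotient[OF p n C _ _ _ that] C0 \<open>lam ^ b \<noteq> 1\<close> lam_a factor der
    by (simp add: a_def b_def)
  have nonzero: "minimal_period av f b w \<Longrightarrow> w \<noteq> 0" for w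
    using b by (auto simp: minimal_period_iff exact_period_def)
  have "1 \<le> b" using b by simp
  note cycle = unique_optimal_cycle[OF algcl C wd_C this roots, unfolded C0]
  show ?thesis
    unfolding a_def[symmetric] b_def[symmetric] using cycle nonzero by blast
qed

end

theorem proposition5p1:
  fixes av :: "'a::field \<Rightarrow> real"
    and p q :: nat and lam :: 'a and f :: "'a fps"
  assumes ultra: "ultrametric_abs av"
    and compl: "complete_abs av"
    and algcl: "alg_closed_field TYPE('a)"
    and p_prime: "prime p"
    and res_char: "av (of_nat p) < 1"
    and q_pos: "q \<ge> 1" and q_coprime: "\<not> p dvd q"
    and lam_unit: "av lam = 1"
    and lam_order: "av (lam ^ q - 1) < 1"
    and lam_order_min: "\<forall>k. 1 \<le> k \<and> k < q \<longrightarrow> \<not> av (lam ^ k - 1) < 1"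
    and f_int: "integral_fps av f"
    and f0: "fps_nth f 0 = 0" and f1: "fps_nth f 1 = lam"
  shows
    "(wideg av (fps_iter f q - fps_X) = enat (q + 1) \<and> lam ^ q \<noteq> 1 \<longrightarrow>
       (\<exists>z0. z0 \<noteq> 0 \<and> minimal_period av f q z0 \<and>
          (\<forall>w. w \<noteq> 0 \<and> minimal_period av f q w \<longrightarrow> w \<in> orbit av f z0)) \<and>
       (\<forall>w0. w0 \<noteq> 0 \<and> minimal_period av f q w0 \<longrightarrow>
          av w0 = av (lam ^ q - 1) powr (1 / real q)))
     \<and>
     (\<forall>n::nat. n \<ge> 1 \<longrightarrow>
        wideg av ((fps_iter f (q * p ^ n) - fps_X) div (fps_iter f (q * p ^ (n - 1)) - fps_X))
          = enat (q * p ^ n) \<longrightarrow>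
        (\<forall>z0. periodic_pt av f (q * p ^ (n - 1)) z0 \<longrightarrow>
           fps_value av (fps_deriv (fps_iter f (q * p ^ n))) z0 \<noteq> 1) \<longrightarrow>
        (\<exists>z0. minimal_period av f (q * p ^ n) z0 \<and>
           (\<forall>w. minimal_period av f (q * p ^ n) w \<longrightarrow> w \<in> orbit av f z0)) \<and>
        (\<forall>z0. minimal_period av f (q * p ^ n) z0 \<longrightarrow>
           av z0 = av ((lam ^ (q * p ^ n) - 1) / (lam ^ (q * p ^ (n - 1)) - 1))
                     powr (1 / real (q * p ^ n))))"
proof -
  interpret rotation_germ av q lam f
    using assms by unfold_locales simp_all
  show ?thesis
    using cycle_of_period_q[OF algcl] cycle_of_period_q_prime_power[OF algcl p_prime] by blast
qed

end
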